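(* Let $X \subseteq 2^\omega$. The following conditions are equivalent: (1) $X$ is an $R$ set; (2) for every Borel function $x \mapsto f^x$ from $2^\omega$ to $\omega^\omega$ there exists $g \in \omega^\omega$ such that for every $x \in X$ there are infinitely many $n$ with $f^x(n) = g(n)$; (3) every Borel image of $X$ has Rothberger's property, i.e. for every Borel function $F$ from $2^\omega$ into a Polish space, the set $F[X]$ has Rothberger's property.
   Context: For $H \subseteq 2^\omega \times 2^\omega$ and $x \in 2^\omega$, $(H)_x = \{y \in 2^\omega : \langle x,y\rangle \in H\}$. A set $X \subseteq 2^\omega$ is an $R$ set if for every Borel set $H \subseteq 2^\omega \times 2^\omega$ such that $(H)_x$ is meager for all $x \in 2^\omega$, we have $\bigcup_{x \in X} (H)_x \neq 2^\omega$. A subset $Y$ of a topological space has Rothberger's property (is a $C''$ set) if for every sequence $\{\mathcal{G}_n : n \in \omega\}$ of covers of $Y$ by open sets there exist $U_n \in \mathcal{G}_n$ ($n\in\omega$) with $Y \subseteq \bigcup_{n\in\omega} U_n$. *)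

theory Defs
  imports "HOL-Analysis.Analysis"
begin

text \<open>Cantor space 2^omega is the type nat => bool, Baire space omega^omega is nat => nat,
  both with the product topology (Function_Topology); Borel sets/functions are taken
  w.r.t. the Borel sigma-algebras of these topological types.\<close>

definition section_at :: "('a \<times> 'b) set \<Rightarrow> 'a \<Rightarrow> 'b set" where
  "section_at H x = {y. (x, y) \<in> H}"

definition nowhere_dense :: "'a::topological_space set \<Rightarrow> bool" where
  "nowhere_dense A \<longleftrightarrow> interior (closure A) = {}"

definition meager :: "'a::topological_space set \<Rightarrow> bool" where
  "meager A \<longleftrightarrow> (\<exists>N :: nat \<Rightarrow> 'a set. (\<forall>n. nowhere_dense (N n)) \<and> A \<subseteq> (\<Union>n. N n))"

definition R_set :: "(nat \<Rightarrow> bool) set \<Rightarrow> bool" where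
  "R_set X \<longleftrightarrow>
     (\<forall>H \<in> sets (borel :: ((nat \<Rightarrow> bool) \<times> (nat \<Rightarrow> bool)) measure).
        (\<forall>x. meager (section_at H x)) \<longrightarrow> (\<Union>x\<in>X. section_at H x) \<noteq> UNIV)"

definition rothberger :: "'a::topological_space set \<Rightarrow> bool" where
  "rothberger Y \<longleftrightarrow>
     (\<forall>G :: nat \<Rightarrow> 'a set set.
        (\<forall>n. G n \<noteq> {} \<and> (\<forall>U\<in>G n. open U) \<and> Y \<subseteq> \<Union>(G n)) \<longrightarrow>
        (\<exists>U :: nat \<Rightarrow> 'a set. (\<forall>n. U n \<in> G n) \<and> Y \<subseteq> (\<Union>n. U n)))"

end

theory Submission
  imports Defs "HOL-Library.Sublist"
begin

text \<open>
  Everything goes through condition (2), called \<open>io_guessable\<close> below.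

  (2) implies (1).  By a uniform version of the Baire property of Borel sets, a Borel set with
  meager sections comes with countably many dense open codes \<open>W x k\<close>, Borel in \<open>x\<close>, such that a
  real meeting all of them avoids the section at \<open>x\<close>.  To build one real that does so for every
  \<open>x \<in> X\<close>, first guess a majorant of the lengths of strings forcing the first codes: this gives an
  interval partition in which, for each \<open>x \<in> X\<close>, infinitely many intervals can hold such a string.
  Then guess the strings themselves on these intervals and concatenate the guesses.

  (1) implies (2).  The pairs \<open>(x, y)\<close> such that \<open>f x\<close> is eventually different from the sequence
  coded by the columns of \<open>y\<close> form a Borel set with meager sections; a real outside all sections
  over \<open>X\<close> codes a guess.

  (2) implies (3): enumerate countable subcovers and guess, for every \<open>x\<close>, the index of a set
  containing \<open>F x\<close>.  (3) implies (2): Rothberger's property of the image of \<open>x \<mapsto> f x\<close> in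
  \<open>\<real>\<^sup>\<nat>\<close>, for the covers by neighbourhoods of integer values of one coordinate, yields a guess.
\<close>

section \<open>Cantor space\<close>

type_synonym cantor = "nat \<Rightarrow> bool"

definition take_seq :: "nat \<Rightarrow> (nat \<Rightarrow> 'a) \<Rightarrow> 'a list" where
  "take_seq n y = map y [0..<n]"

definition cylinder :: "'a list \<Rightarrow> (nat \<Rightarrow> 'a) set" where
  "cylinder s = {y. \<forall>i<length s. y i = s ! i}"

lemma length_take_seq [simp]: "length (take_seq n y) = n"
  by (simp add: take_seq_def)

lemma nth_take_seq [simp]: "i < n \<Longrightarrow> take_seq n y ! i = y i"
  by (simp add: take_seq_def)

lemma take_take_seq: "take m (take_seq n y) = take_seq (min m n) y"
  by (simp add: take_seq_def take_map take_upt min_def)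

lemma take_seq_add: "take_seq (m + n) y = take_seq m y @ map (\<lambda>j. y (m + j)) [0..<n]"
  by (induction n) (auto simp: take_seq_def)

lemma prefix_take_seq_iff: "prefix v (take_seq n y) \<longleftrightarrow> (\<exists>m\<le>n. v = take_seq m y)"
proof
  assume "prefix v (take_seq n y)"
  then obtain zs where zs: "take_seq n y = v @ zs"
    by (auto simp: prefix_def)
  then have "length v \<le> n"
    by (metis le_add1 length_append length_take_seq)
  moreover have "v = take_seq (length v) y"
    by (metis calculation min.absorb1 take_take_seq append_eq_conv_conj zs)
  ultimately show "\<exists>m\<le>n. v = take_seq m y"
    by blast
next
  assume "\<exists>m\<le>n. v = take_seq m y"
  then show "prefix v (take_seq n y)"
    by (metis le_add_diff_inverse prefix_def take_seq_add)
qed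

lemma take_seq_prefix_cases: "prefix (take_seq m y) (take_seq n y) \<or> prefix (take_seq n y) (take_seq m y)"
  by (meson nle_le prefix_take_seq_iff)

lemma mem_cylinder_take_seq: "z \<in> cylinder (take_seq n y) \<longleftrightarrow> (\<forall>i<n. z i = y i)"
  by (simp add: cylinder_def)

lemma take_seq_in_cylinder [simp]: "y \<in> cylinder (take_seq n y)"
  by (simp add: cylinder_def)

lemma take_seq_of_cylinder: "y \<in> cylinder s \<Longrightarrow> take_seq (length s) y = s"
  by (auto simp: cylinder_def intro: nth_equalityI)

lemma cylinder_append_subset: "cylinder (s @ t) \<subseteq> cylinder s"
  by (auto simp: cylinder_def nth_append)

lemma cylinder_nonempty: "cylinder s \<noteq> {}"
proof -
  have "(\<lambda>i. if i < length s then s ! i else undefined) \<in> cylinder s"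
    by (simp add: cylinder_def)
  then show ?thesis by blast
qed

lemma open_vimage_coordinate: "open ((\<lambda>y :: nat \<Rightarrow> 'a::discrete_topology. y i) -` A)"
  by (rule open_vimage) (simp_all add: open_discrete continuous_on_product_coordinates)

lemma open_cylinder [simp]: "open (cylinder (s :: 'a::discrete_topology list))"
proof -
  have "cylinder s = (\<Inter>i<length s. (\<lambda>y. y i) -` {s ! i})"
    by (auto simp: cylinder_def)
  then show ?thesis
    by (simp add: open_INT open_vimage_coordinate)
qed

lemma open_contains_cylinder:
  fixes U :: "(nat \<Rightarrow> 'a::topological_space) set"
  assumes "open U" "y \<in> U"
  obtains n where "cylinder (take_seq n y) \<subseteq> U"
proof -
  have "openin (product_topology (\<lambda>_. euclidean) UNIV) U"
    using assms(1) unfolding open_fun_def by simp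
  from product_topology_open_contains_basis[OF this assms(2)] obtain B where
    B: "y \<in> Pi\<^sub>E UNIV B" "\<forall>i. openin euclidean (B i)"
       "finite {i. B i \<noteq> topspace euclidean}" "Pi\<^sub>E UNIV B \<subseteq> U"
    by auto
  obtain n where n: "{i. B i \<noteq> UNIV} \<subseteq> {..<n}"
    using finite_nat_bounded B(3) by auto
  have "cylinder (take_seq n y) \<subseteq> Pi\<^sub>E UNIV B"
  proof
    fix z assume z: "z \<in> cylinder (take_seq n y)"
    have "z i \<in> B i" for i
    proof (cases "B i = UNIV")
      case False
      then have "i < n" using n by blast
      then show ?thesis using z B(1) by (auto simp: mem_cylinder_take_seq)
    qed simp
    then show "z \<in> Pi\<^sub>E UNIV B" by auto
  qed
  then show ?thesis using B(4) by (intro that) blast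
qed

lemma nonempty_open_not_meager:
  fixes U :: "'a::topological_space set"
  assumes "locally_compact_space (euclidean :: 'a topology)" "Hausdorff_space (euclidean :: 'a topology)"
    and "open U" "U \<noteq> {}"
  shows "\<not> meager U"
proof
  assume "meager U"
  then obtain N :: "nat \<Rightarrow> 'a set" where N: "\<forall>n. nowhere_dense (N n)" "U \<subseteq> (\<Union>n. N n)"
    unfolding meager_def by blast
  have "regular_space (euclidean :: 'a topology)"
    using assms(1,2) by (rule locally_compact_Hausdorff_imp_regular_space)
  then have "euclidean interior_of \<Union>(range (\<lambda>n. closure (N n))) = {}"
    using assms(1) N(1) unfolding nowhere_dense_def
    by (intro Baire_category_alt) auto
  moreover have "U \<subseteq> (\<Union>n. closure (N n))"
    using N(2) closure_subset by blast
  then have "U \<subseteq> interior (\<Union>n. closure (N n))"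
    using assms(3) by (rule interior_maximal)
  ultimately show False
    using assms(4) by simp
qed

lemma Hausdorff_space_euclidean_t2: "Hausdorff_space (euclidean :: 'a::t2_space topology)"
  unfolding Hausdorff_space_def disjnt_def by (metis hausdorff open_openin)

lemma nonempty_open_not_meager_cantor:
  fixes U :: "cantor set"
  assumes "open U" "U \<noteq> {}"
  shows "\<not> meager U"
proof (rule nonempty_open_not_meager[OF _ _ assms])
  have "compact_space (euclidean :: bool topology)"
    by (simp add: compact_space_def finite_imp_compact)
  then have "compact_space (product_topology (\<lambda>_::nat. euclidean :: bool topology) UNIV)"
    by (simp add: compact_space_product_topology)
  then show "locally_compact_space (euclidean :: cantor topology)"
    by (simp add: euclidean_product_topology compact_imp_locally_compact_space)
  have "Hausdorff_space (product_topology (\<lambda>_::nat. euclidean :: bool topology) UNIV)"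
    by (simp add: Hausdorff_space_product_topology Hausdorff_space_euclidean_t2)
  then show "Hausdorff_space (euclidean :: cantor topology)"
    by (simp add: euclidean_product_topology)
qed

section \<open>A uniform Baire property of Borel sets\<close>

definition dense_family :: "(nat \<Rightarrow> 'a list \<Rightarrow> bool) \<Rightarrow> bool" where
  "dense_family W \<longleftrightarrow> (\<forall>k s. \<exists>u. W k (s @ u))"

definition generic_for :: "(nat \<Rightarrow> 'a list \<Rightarrow> bool) \<Rightarrow> (nat \<Rightarrow> 'a) \<Rightarrow> bool" where
  "generic_for W y \<longleftrightarrow> (\<forall>k. \<exists>n. W k (take_seq n y))"

text \<open>On the comeager set of reals generic for \<open>W x\<close>, the section of \<open>H\<close> at \<open>x\<close> coincides with
  the open set coded by \<open>Q x\<close>; both codes depend Borel measurably on \<open>x\<close>.\<close>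
definition uniform_baire_property :: "('a::topological_space \<times> cantor) set \<Rightarrow> bool" where
  "uniform_baire_property H \<longleftrightarrow>
    (\<exists>(Q :: 'a \<Rightarrow> bool list \<Rightarrow> bool) (W :: 'a \<Rightarrow> nat \<Rightarrow> bool list \<Rightarrow> bool).
      (\<forall>u. Measurable.pred borel (\<lambda>x. Q x u)) \<and> (\<forall>k u. Measurable.pred borel (\<lambda>x. W x k u)) \<and>
      (\<forall>x. dense_family (W x)) \<and>
      (\<forall>x y. generic_for (W x) y \<longrightarrow> ((x, y) \<in> H \<longleftrightarrow> (\<exists>n. Q x (take_seq n y)))))"

lemma uniform_baire_propertyI:
  fixes Q :: "'a::topological_space \<Rightarrow> bool list \<Rightarrow> bool" and W :: "'a \<Rightarrow> nat \<Rightarrow> bool list \<Rightarrow> bool"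
  assumes "\<And>u. Measurable.pred borel (\<lambda>x. Q x u)" "\<And>k u. Measurable.pred borel (\<lambda>x. W x k u)"
    and "\<And>x. dense_family (W x)"
    and "\<And>x y. generic_for (W x) y \<Longrightarrow> (x, y) \<in> H \<longleftrightarrow> (\<exists>n. Q x (take_seq n y))"
  shows "uniform_baire_property H"
  unfolding uniform_baire_property_def using assms by blast

lemma uniform_baire_propertyE:
  assumes "uniform_baire_property H"
  obtains Q :: "'a::topological_space \<Rightarrow> bool list \<Rightarrow> bool" and W :: "'a \<Rightarrow> nat \<Rightarrow> bool list \<Rightarrow> bool"
  where "\<And>u. Measurable.pred borel (\<lambda>x. Q x u)" "\<And>k u. Measurable.pred borel (\<lambda>x. W x k u)"
    and "\<And>x. dense_family (W x)"
    and "\<And>x y. generic_for (W x) y \<Longrightarrow> (x, y) \<in> H \<longleftrightarrow> (\<exists>n. Q x (take_seq n y))"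
  using assms unfolding uniform_baire_property_def by blast

lemma uniform_baire_property_open:
  fixes G :: "('a::topological_space \<times> cantor) set"
  assumes "open G"
  shows "uniform_baire_property G"
proof -
  define Q where "Q x u \<longleftrightarrow> (\<exists>A. open A \<and> x \<in> A \<and> A \<times> cylinder u \<subseteq> G)" for x u
  show ?thesis
  proof (rule uniform_baire_propertyI[of Q "\<lambda>_ _ _. True"])
    have "{x. Q x u} = \<Union>{A. open A \<and> A \<times> cylinder u \<subseteq> G}" for u
      unfolding Q_def by auto
    then have "open {x. Q x u}" for u
      by (simp add: open_Union)
    then show "Measurable.pred borel (\<lambda>x. Q x u)" for u
      by (simp add: pred_def)
    show "(x, y) \<in> G \<longleftrightarrow> (\<exists>n. Q x (take_seq n y))" for x y
    proof
      assume "(x, y) \<in> G"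
      then obtain A B where "open A" "open B" "(x, y) \<in> A \<times> B" "A \<times> B \<subseteq> G"
        by (rule open_prod_elim[OF assms])
      then have AB: "open A" "open B" "x \<in> A" "y \<in> B" "A \<times> B \<subseteq> G"
        by auto
      obtain n where "cylinder (take_seq n y) \<subseteq> B"
        using open_contains_cylinder[OF AB(2,4)] .
      then have "Q x (take_seq n y)"
        unfolding Q_def using AB by (meson order_trans subset_refl Sigma_mono)
      then show "\<exists>n. Q x (take_seq n y)" ..
    next
      assume "\<exists>n. Q x (take_seq n y)"
      then show "(x, y) \<in> G"
        unfolding Q_def by (meson SigmaI subsetD take_seq_in_cylinder)
    qed
  qed (simp_all add: dense_family_def)
qed

definition avoids :: "('a list \<Rightarrow> bool) \<Rightarrow> 'a list \<Rightarrow> bool" where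
  "avoids Q u \<longleftrightarrow> (\<forall>v. prefix u v \<or> prefix v u \<longrightarrow> \<not> Q v)"

definition decides :: "('a list \<Rightarrow> bool) \<Rightarrow> 'a list \<Rightarrow> bool" where
  "decides Q u \<longleftrightarrow> (\<exists>v. prefix v u \<and> Q v) \<or> avoids Q u"

lemma extension_decides: "\<exists>u. decides Q (s @ u)"
proof (cases "\<exists>v. Q v \<and> (prefix s v \<or> prefix v s)")
  case True
  then obtain v where "Q v" "prefix s v \<or> prefix v s"
    by blast
  then obtain u where "prefix v (s @ u)"
    by (metis prefixE prefix_order.eq_refl prefix_prefix)
  then show ?thesis
    using \<open>Q v\<close> unfolding decides_def by blast
next
  case False
  then have "decides Q (s @ [])"
    unfolding decides_def avoids_def by auto
  then show ?thesis ..
qed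

lemma decides_take_seq:
  assumes "decides Q (take_seq n y)"
  shows "(\<exists>m. avoids Q (take_seq m y)) \<longleftrightarrow> \<not> (\<exists>m. Q (take_seq m y))"
proof -
  have "\<not> Q (take_seq m y)" if "avoids Q (take_seq k y)" for k m
    using that take_seq_prefix_cases unfolding avoids_def by blast
  moreover have "(\<exists>m. Q (take_seq m y)) \<or> avoids Q (take_seq n y)"
    using assms unfolding decides_def by (auto simp: prefix_take_seq_iff)
  ultimately show ?thesis
    by blast
qed

lemma uniform_baire_property_Compl:
  fixes H :: "('a::topological_space \<times> cantor) set"
  assumes "uniform_baire_property H"
  shows "uniform_baire_property (- H)"
proof -
  obtain Q :: "'a \<Rightarrow> bool list \<Rightarrow> bool" and W :: "'a \<Rightarrow> nat \<Rightarrow> bool list \<Rightarrow> bool"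
    where Q [measurable]: "\<And>u. Measurable.pred borel (\<lambda>x. Q x u)"
    and W: "\<And>k u. Measurable.pred borel (\<lambda>x. W x k u)"
    and dense: "\<And>x. dense_family (W x)"
    and H: "\<And>x y. generic_for (W x) y \<Longrightarrow> (x, y) \<in> H \<longleftrightarrow> (\<exists>n. Q x (take_seq n y))"
    by (rule uniform_baire_propertyE[OF assms]) blast
  \<comment> \<open>the new code 0 forces a generic real either into the open set coded by \<open>Q x\<close> or away from it\<close>
  define W' where "W' x k = (case k of 0 \<Rightarrow> decides (Q x) | Suc j \<Rightarrow> W x j)" for x k
  show ?thesis
  proof (rule uniform_baire_propertyI[of "\<lambda>x. avoids (Q x)" W'])
    show "Measurable.pred borel (\<lambda>x. avoids (Q x) u)" for u
      unfolding avoids_def by measurable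
    then have "Measurable.pred borel (\<lambda>x. decides (Q x) u)" for u
      unfolding decides_def by measurable
    then show "Measurable.pred borel (\<lambda>x. W' x k u)" for k u
      by (cases k) (simp_all add: W'_def W)
    show "dense_family (W' x)" for x
      using dense[of x] extension_decides unfolding dense_family_def W'_def by (simp split: nat.split) blast
    fix x y
    assume gen: "generic_for (W' x) y"
    then have "generic_for (W x) y"
      unfolding generic_for_def W'_def by (metis nat.case(2))
    then have "(x, y) \<in> H \<longleftrightarrow> (\<exists>n. Q x (take_seq n y))"
      by (rule H)
    moreover obtain n where "decides (Q x) (take_seq n y)"
      using gen unfolding generic_for_def W'_def by (metis nat.case(1))
    ultimately show "(x, y) \<in> - H \<longleftrightarrow> (\<exists>n. avoids (Q x) (take_seq n y))"
      using decides_take_seq by blast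
  qed
qed

lemma uniform_baire_property_UN:
  fixes A :: "nat \<Rightarrow> ('a::topological_space \<times> cantor) set"
  assumes "\<And>i. uniform_baire_property (A i)"
  shows "uniform_baire_property (\<Union>i. A i)"
proof -
  have "\<forall>i. \<exists>(Q :: 'a \<Rightarrow> bool list \<Rightarrow> bool) (W :: 'a \<Rightarrow> nat \<Rightarrow> bool list \<Rightarrow> bool).
      (\<forall>u. Measurable.pred borel (\<lambda>x. Q x u)) \<and> (\<forall>k u. Measurable.pred borel (\<lambda>x. W x k u)) \<and>
      (\<forall>x. dense_family (W x)) \<and>
      (\<forall>x y. generic_for (W x) y \<longrightarrow> ((x, y) \<in> A i \<longleftrightarrow> (\<exists>n. Q x (take_seq n y))))"
    using assms unfolding uniform_baire_property_def by blast
  then obtain Q :: "nat \<Rightarrow> 'a \<Rightarrow> bool list \<Rightarrow> bool" and W :: "nat \<Rightarrow> 'a \<Rightarrow> nat \<Rightarrow> bool list \<Rightarrow> bool"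
    where Q [measurable]: "\<And>i u. Measurable.pred borel (\<lambda>x. Q i x u)"
      and W: "\<And>i k u. Measurable.pred borel (\<lambda>x. W i x k u)"
      and dense: "\<And>i x. dense_family (W i x)"
      and A: "\<And>i x y. generic_for (W i x) y \<Longrightarrow> (x, y) \<in> A i \<longleftrightarrow> (\<exists>n. Q i x (take_seq n y))"
    by metis
  define W' where "W' x k = W (fst (prod_decode k)) x (snd (prod_decode k))" for x k
  show ?thesis
  proof (rule uniform_baire_propertyI[of "\<lambda>x u. \<exists>i. Q i x u" W'])
    show "Measurable.pred borel (\<lambda>x. \<exists>i. Q i x u)" for u
      by measurable
    show "Measurable.pred borel (\<lambda>x. W' x k u)" for k u
      unfolding W'_def by (rule W)
    show "dense_family (W' x)" for x
      using dense unfolding W'_def dense_family_def by blast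
    fix x y
    assume "generic_for (W' x) y"
    then have "generic_for (W i x) y" for i
      unfolding generic_for_def W'_def by (metis fst_conv prod_encode_inverse snd_conv)
    then show "(x, y) \<in> (\<Union>i. A i) \<longleftrightarrow> (\<exists>n. \<exists>i. Q i x (take_seq n y))"
      using A by blast
  qed
qed

lemma uniform_baire_property_borel:
  fixes H :: "('a::topological_space \<times> cantor) set"
  assumes "H \<in> sets borel"
  shows "uniform_baire_property H"
proof -
  have "H \<in> sigma_sets UNIV {S. open S}"
    using assms by (simp add: sets_borel)
  then show ?thesis
  proof (induction rule: sigma_sets.induct)
    case (Compl a)
    then show ?case
      by (simp add: uniform_baire_property_Compl Compl_eq_Diff_UNIV[symmetric])
  qed (simp_all add: uniform_baire_property_open uniform_baire_property_UN)
qed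

lemma Collect_take_seq_eq_UN_cylinder: "{y. \<exists>n. P (take_seq n y)} = (\<Union>s\<in>{s. P s}. cylinder s)"
  by (auto dest: take_seq_of_cylinder) (metis take_seq_of_cylinder)

lemma nowhere_dense_never_meets:
  assumes "\<And>s. \<exists>u. P (s @ u)"
  shows "nowhere_dense (- {y :: nat \<Rightarrow> 'a::discrete_topology. \<exists>n. P (take_seq n y)})"
    (is "nowhere_dense (- ?D)")
proof -
  have "open ?D"
    unfolding Collect_take_seq_eq_UN_cylinder by (simp add: open_UN)
  then have "closure (- ?D) = - ?D"
    by (simp add: closed_open)
  moreover have "interior (- ?D) = {}"
  proof (rule ccontr)
    assume "interior (- ?D) \<noteq> {}"
    then obtain z where z: "z \<in> interior (- ?D)"
      by blast
    obtain m where "cylinder (take_seq m z) \<subseteq> interior (- ?D)"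
      using open_contains_cylinder[OF open_interior z] .
    then have m: "cylinder (take_seq m z) \<subseteq> - ?D"
      using interior_subset by blast
    obtain u where u: "P (take_seq m z @ u)"
      using assms by blast
    obtain w where w: "w \<in> cylinder (take_seq m z @ u)"
      using cylinder_nonempty by blast
    then have "take_seq (length (take_seq m z @ u)) w = take_seq m z @ u"
      by (rule take_seq_of_cylinder)
    then have "w \<in> ?D"
      using u by (metis (mono_tags) mem_Collect_eq)
    moreover have "w \<in> - ?D"
      using w m cylinder_append_subset by blast
    ultimately show False
      by blast
  qed
  ultimately show ?thesis
    unfolding nowhere_dense_def by simp
qed

lemma meager_subset: "meager B \<Longrightarrow> A \<subseteq> B \<Longrightarrow> meager A"
  unfolding meager_def by blast

lemma meager_Un_nowhere_dense:
  fixes A :: "'a::topological_space set" and B :: "nat \<Rightarrow> 'a set"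
  assumes "meager A" "\<And>n. nowhere_dense (B n)"
  shows "meager (A \<union> (\<Union>n. B n))"
proof -
  obtain N :: "nat \<Rightarrow> 'a set" where N: "\<forall>n. nowhere_dense (N n)" "A \<subseteq> (\<Union>n. N n)"
    using assms(1) unfolding meager_def by blast
  define NB where "NB j = (if even j then N (j div 2) else B (j div 2))" for j
  have "\<forall>j. nowhere_dense (NB j)"
    using N(1) assms(2) by (simp add: NB_def)
  moreover have "A \<union> (\<Union>n. B n) \<subseteq> (\<Union>j. NB j)"
  proof
    fix z
    assume "z \<in> A \<union> (\<Union>n. B n)"
    then obtain n where "z \<in> N n \<or> z \<in> B n"
      using N(2) by blast
    moreover have "N n = NB (2 * n)" "B n = NB (2 * n + 1)"
      by (simp_all add: NB_def)
    ultimately show "z \<in> (\<Union>j. NB j)"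
      by (metis UNIV_I UN_iff)
  qed
  ultimately show ?thesis
    unfolding meager_def by blast
qed

lemma coded_open_set_empty_if_meager:
  fixes S :: "cantor set" and Q :: "bool list \<Rightarrow> bool"
  assumes "meager S" "dense_family W"
    and S: "\<And>y. generic_for W y \<Longrightarrow> y \<in> S \<longleftrightarrow> (\<exists>n. Q (take_seq n y))"
  shows "\<not> Q v"
proof
  assume "Q v"
  define D where "D k = {y. \<exists>n. W k (take_seq n y)}" for k
  \<comment> \<open>the generic elements of the cylinder of \<open>v\<close> lie in \<open>S\<close>, the others in some \<open>- D k\<close>\<close>
  have "cylinder v \<subseteq> S \<union> (\<Union>k. - D k)"
  proof
    fix y
    assume y: "y \<in> cylinder v"
    show "y \<in> S \<union> (\<Union>k. - D k)"
    proof (cases "generic_for W y")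
      case True
      then have "y \<in> S"
        using S \<open>Q v\<close> take_seq_of_cylinder[OF y] by metis
      then show ?thesis
        by blast
    qed (auto simp: generic_for_def D_def)
  qed
  moreover have "nowhere_dense (- D k)" for k
    unfolding D_def using assms(2) by (intro nowhere_dense_never_meets) (simp add: dense_family_def)
  then have "meager (S \<union> (\<Union>k. - D k))"
    by (intro meager_Un_nowhere_dense assms(1))
  ultimately have "meager (cylinder v)"
    by (rule meager_subset[rotated])
  then show False
    by (simp add: nonempty_open_not_meager_cantor cylinder_nonempty)
qed

lemma borel_meager_sections_avoid_generic:
  fixes H :: "('a::topological_space \<times> cantor) set"
  assumes "H \<in> sets borel" "\<And>x. meager (section_at H x)"
  obtains W :: "'a \<Rightarrow> nat \<Rightarrow> bool list \<Rightarrow> bool"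
  where "\<And>k u. Measurable.pred borel (\<lambda>x. W x k u)" "\<And>x. dense_family (W x)"
    and "\<And>x y. generic_for (W x) y \<Longrightarrow> (x, y) \<notin> H"
proof -
  obtain Q :: "'a \<Rightarrow> bool list \<Rightarrow> bool" and W :: "'a \<Rightarrow> nat \<Rightarrow> bool list \<Rightarrow> bool"
    where W: "\<And>k u. Measurable.pred borel (\<lambda>x. W x k u)"
    and dense: "\<And>x. dense_family (W x)"
    and H: "\<And>x y. generic_for (W x) y \<Longrightarrow> (x, y) \<in> H \<longleftrightarrow> (\<exists>n. Q x (take_seq n y))"
    by (rule uniform_baire_propertyE[OF uniform_baire_property_borel[OF assms(1)]]) blast
  have "\<not> Q x v" for x v
    by (rule coded_open_set_empty_if_meager[OF assms(2)[of x] dense[of x]]) (simp add: section_at_def H)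
  then show ?thesis
    using W dense H by (intro that[of W]) blast+
qed

section \<open>Guessing Borel functions\<close>

definition io_guessable :: "'a::topological_space set \<Rightarrow> bool" where
  "io_guessable X \<longleftrightarrow>
    (\<forall>f :: 'a \<Rightarrow> nat \<Rightarrow> nat. f \<in> borel_measurable borel \<longrightarrow> (\<exists>g. \<forall>x\<in>X. infinite {n. f x n = g n}))"

lemma borel_measurable_nat_iff_count_space:
  "(f :: 'a \<Rightarrow> nat) \<in> borel_measurable M \<longleftrightarrow> f \<in> M \<rightarrow>\<^sub>M count_space UNIV"
  using measurable_cong_sets[OF refl sets_borel_eq_count_space] by blast

lemma borel_measurable_nat_seq_iff:
  fixes f :: "'a \<Rightarrow> nat \<Rightarrow> nat"
  shows "f \<in> borel_measurable M \<longleftrightarrow> (\<forall>n. (\<lambda>x. f x n) \<in> M \<rightarrow>\<^sub>M count_space UNIV)"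
  by (metis borel_measurable_nat_iff_count_space measurable_product_then_coordinatewise
      measurable_coordinatewise_then_product)

lemma measurable_map_count_space:
  fixes \<phi> :: "'i \<Rightarrow> 'a \<Rightarrow> 'b::countable"
  assumes "\<And>r. \<phi> r \<in> M \<rightarrow>\<^sub>M count_space UNIV"
  shows "(\<lambda>x. map (\<lambda>r. \<phi> r x) rs) \<in> M \<rightarrow>\<^sub>M count_space UNIV"
proof (induction rs)
  case (Cons r rs)
  have [measurable]: "\<phi> r \<in> M \<rightarrow>\<^sub>M count_space UNIV"
    by (rule assms)
  have [measurable]: "(\<lambda>x. map (\<lambda>r. \<phi> r x) rs) \<in> M \<rightarrow>\<^sub>M count_space UNIV"
    by (rule Cons.IH)
  show ?case
    unfolding list.map by measurable
qed simp

lemma measurable_enumerate: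
  fixes A :: "'a \<Rightarrow> nat set"
  assumes "\<And>n. Measurable.pred M (\<lambda>x. n \<in> A x)"
  shows "(\<lambda>x. enumerate (A x) r) \<in> M \<rightarrow>\<^sub>M count_space UNIV"
  using assms
proof (induction r arbitrary: A)
  case 0
  have [measurable]: "Measurable.pred M (\<lambda>x. n \<in> A x)" for n
    by (rule "0.prems")
  show ?case
    unfolding enumerate_0 by measurable
next
  case (Suc r)
  have [measurable]: "Measurable.pred M (\<lambda>x. n \<in> A x)" for n
    by (rule Suc.prems)
  have "Measurable.pred M (\<lambda>x. n \<in> A x - {LEAST n. n \<in> A x})" for n
    by measurable
  then show ?case
    unfolding enumerate_Suc by (rule Suc.IH)
qed

lemma greedy_distinct_representatives:
  fixes K :: "nat \<Rightarrow> 'a set"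
  obtains ch :: "nat \<Rightarrow> 'a"
  where "\<And>i. i < card (K i) \<Longrightarrow> ch i \<in> K i" and "inj_on ch {i. i < card (K i)}"
proof -
  \<comment> \<open>\<open>cs i\<close> lists the representatives chosen before stage \<open>i\<close>; there are at most \<open>i\<close> of them\<close>
  define pick where "pick c i = (SOME m. m \<in> K i \<and> m \<notin> set c)" for c i
  define cs where "cs = rec_nat [] (\<lambda>i c. c @ (if i < card (K i) then [pick c i] else []))"
  have cs_0: "cs 0 = []" and cs_Suc: "cs (Suc i) = cs i @ (if i < card (K i) then [pick (cs i) i] else [])"
    for i by (simp_all add: cs_def)
  have length_cs: "length (cs i) \<le> i" for i
    by (induction i) (simp_all add: cs_0 cs_Suc)
  have cs_mono: "set (cs i) \<subseteq> set (cs j)" if "i \<le> j" for i j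
    using that by (induction j rule: dec_induct) (auto simp: cs_Suc)
  have pick: "pick (cs i) i \<in> K i \<and> pick (cs i) i \<notin> set (cs i)" if "i < card (K i)" for i
  proof -
    have "card (set (cs i)) < card (K i)"
      using card_length[of "cs i"] length_cs[of i] that by linarith
    then have "\<exists>m. m \<in> K i \<and> m \<notin> set (cs i)"
      by (meson card_mono finite_set leD subsetI)
    then show ?thesis
      unfolding pick_def by (rule someI_ex)
  qed
  show ?thesis
  proof (rule that[of "\<lambda>i. pick (cs i) i"])
    show "pick (cs i) i \<in> K i" if "i < card (K i)" for i
      using pick[OF that] by blast
    show "inj_on (\<lambda>i. pick (cs i) i) {i. i < card (K i)}"
    proof (rule linorder_inj_onI)
      fix i j
      assume "i < j" and good: "i \<in> {i. i < card (K i)}" "j \<in> {i. i < card (K i)}"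
      then have "pick (cs i) i \<in> set (cs j)"
        using cs_mono[of "Suc i" j] by (auto simp: cs_Suc)
      then show "pick (cs i) i \<noteq> pick (cs j) j"
        using pick good(2) by auto
    qed auto
  qed
qed

lemma diagonal_agreement:
  fixes L :: "nat \<Rightarrow> ('a \<times> 'b) list"
  obtains g :: "'a \<Rightarrow> 'b" and ch :: "nat \<Rightarrow> 'a"
  where "\<And>i. i < card (fst ` set (L i)) \<Longrightarrow> (ch i, g (ch i)) \<in> set (L i)"
    and "inj_on ch {i. i < card (fst ` set (L i))}"
proof -
  define G where "G = {i. i < card (fst ` set (L i))}"
  obtain ch :: "nat \<Rightarrow> 'a" where ch: "\<And>i. i \<in> G \<Longrightarrow> ch i \<in> fst ` set (L i)" and inj: "inj_on ch G"
    unfolding G_def mem_Collect_eq by (rule greedy_distinct_representatives[of "\<lambda>i. fst ` set (L i)"]) blast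
  define g where "g m = the (map_of (L (the_inv_into G ch m)) m)" for m
  show ?thesis
  proof (rule that[where g = g and ch = ch])
    show "(ch i, g (ch i)) \<in> set (L i)" if "i < card (fst ` set (L i))" for i
    proof -
      have "i \<in> G"
        using that by (simp add: G_def)
      then have "g (ch i) = the (map_of (L i) (ch i))"
        by (simp add: g_def the_inv_into_f_f[OF inj])
      moreover have "map_of (L i) (ch i) \<noteq> None"
        using ch[OF \<open>i \<in> G\<close>] by (simp add: map_of_eq_None_iff)
      ultimately show ?thesis
        by (metis map_of_SomeD option.collapse)
    qed
  qed (use inj G_def in simp)
qed

definition graph_prefix :: "(nat \<Rightarrow> 'a) \<Rightarrow> ('a \<Rightarrow> 'b) \<Rightarrow> nat \<Rightarrow> ('a \<times> 'b) list" where
  "graph_prefix e \<phi> i = map (\<lambda>r. (e r, \<phi> (e r))) [0..<Suc i]"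

lemma card_keys_graph_prefix:
  assumes "inj e"
  shows "card (fst ` set (graph_prefix e \<phi> i)) = Suc i"
proof -
  have "fst ` set (graph_prefix e \<phi> i) = e ` {0..<Suc i}"
    unfolding graph_prefix_def by (simp only: set_map image_image set_upt fst_conv)
  then show ?thesis
    using assms by (simp add: card_image inj_on_subset)
qed

lemma mem_graph_prefix: "(a, b) \<in> set (graph_prefix e \<phi> i) \<Longrightarrow> a \<in> range e \<and> b = \<phi> a"
  unfolding graph_prefix_def by auto

lemma io_guessable_along_injections:
  fixes X :: "'a::topological_space set" and f e :: "'a \<Rightarrow> nat \<Rightarrow> nat"
  assumes "io_guessable X"
    and [measurable]: "\<And>n. (\<lambda>x. f x n) \<in> borel \<rightarrow>\<^sub>M count_space UNIV"
    and [measurable]: "\<And>r. (\<lambda>x. e x r) \<in> borel \<rightarrow>\<^sub>M count_space UNIV"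
    and inj: "\<And>x. x \<in> X \<Longrightarrow> inj (e x)"
  shows "\<exists>g. \<forall>x\<in>X. infinite {n \<in> range (e x). f x n = g n}"
proof -
  \<comment> \<open>a correct guess of \<open>graph_prefix (e x) (f x) i\<close> offers \<open>i + 1\<close> positions,
    one of which is still unused by the earlier stages\<close>
  have [measurable]: "(\<lambda>x. graph_prefix (e x) (f x) i) \<in> borel \<rightarrow>\<^sub>M count_space UNIV" for i
    unfolding graph_prefix_def by (rule measurable_map_count_space) measurable
  have "(\<lambda>x i. to_nat (graph_prefix (e x) (f x) i)) \<in> borel_measurable borel"
    unfolding borel_measurable_nat_seq_iff by measurable
  then obtain G where G: "\<forall>x\<in>X. infinite {i. to_nat (graph_prefix (e x) (f x) i) = G i}"
    using assms(1) unfolding io_guessable_def by blast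
  define L where "L i = (from_nat (G i) :: (nat \<times> nat) list)" for i
  obtain g ch where g: "\<And>i. i < card (fst ` set (L i)) \<Longrightarrow> (ch i, g (ch i)) \<in> set (L i)"
    and inj_ch: "inj_on ch {i. i < card (fst ` set (L i))}"
    by (rule diagonal_agreement[of L]) blast
  have "infinite {n \<in> range (e x). f x n = g n}" if x: "x \<in> X" for x
  proof -
    define I where "I = {i. to_nat (graph_prefix (e x) (f x) i) = G i}"
    have good: "i < card (fst ` set (L i)) \<and> ch i \<in> range (e x) \<and> f x (ch i) = g (ch i)"
      if "i \<in> I" for i
    proof -
      have "G i = to_nat (graph_prefix (e x) (f x) i)"
        using that by (simp add: I_def)
      then have L_i: "L i = graph_prefix (e x) (f x) i"
        by (simp add: L_def)
      have card: "i < card (fst ` set (L i))"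
        unfolding L_i card_keys_graph_prefix[OF inj[OF x]] by simp
      show ?thesis
        using card mem_graph_prefix[OF g[OF card, unfolded L_i]] by simp
    qed
    have "inj_on ch I"
      using inj_ch good by (blast intro: inj_on_subset)
    moreover have "infinite I"
      using G x by (simp add: I_def)
    ultimately have "infinite (ch ` I)"
      using finite_image_iff by blast
    moreover have "ch ` I \<subseteq> {n \<in> range (e x). f x n = g n}"
      using good by auto
    ultimately show ?thesis
      using infinite_super by blast
  qed
  then show ?thesis
    by blast
qed

lemma io_guessable_on_sets:
  fixes X :: "'a::topological_space set" and f :: "'a \<Rightarrow> nat \<Rightarrow> nat" and A :: "'a \<Rightarrow> nat set"
  assumes "io_guessable X" and f: "\<And>n. (\<lambda>x. f x n) \<in> borel \<rightarrow>\<^sub>M count_space UNIV"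
    and A: "\<And>n. Measurable.pred borel (\<lambda>x. n \<in> A x)" and A_inf: "\<And>x. x \<in> X \<Longrightarrow> infinite (A x)"
  shows "\<exists>g. \<forall>x\<in>X. infinite {n \<in> A x. f x n = g n}"
proof -
  have "(\<lambda>x. enumerate (A x) r) \<in> borel \<rightarrow>\<^sub>M count_space UNIV" for r
    using A by (rule measurable_enumerate)
  then have "\<exists>g. \<forall>x\<in>X. infinite {n \<in> range (enumerate (A x)). f x n = g n}"
    using A_inf by (intro io_guessable_along_injections[OF assms(1) f]) (auto intro: inj_enumerate)
  then show ?thesis
    using A_inf by (simp add: range_enumerate)
qed

lemma strict_mono_interval_cover:
  fixes p :: "nat \<Rightarrow> nat"
  assumes "strict_mono p" "p 0 = 0"
  shows "\<exists>i. p i \<le> n \<and> n < p (Suc i)"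
proof (induction n)
  case 0
  have "p 0 < p (Suc 0)"
    using assms(1) by (rule strict_monoD) simp
  then show ?case
    using assms(2) by auto
next
  case (Suc n)
  then obtain i where i: "p i \<le> n" "n < p (Suc i)"
    by blast
  show ?case
  proof (cases "Suc n < p (Suc i)")
    case False
    then have "p (Suc i) = Suc n"
      using i(2) by simp
    moreover have "p (Suc i) < p (Suc (Suc i))"
      using assms(1) by (rule strict_monoD) simp
    ultimately show ?thesis
      by (metis order_refl)
  qed (use i in \<open>auto intro: exI[of _ i]\<close>)
qed

lemma interval_partition_catches_majorant:
  fixes M h p :: "nat \<Rightarrow> nat"
  assumes M: "mono M" and p: "strict_mono p" "p 0 = 0"
    and h_le_p: "\<And>m i. m \<le> p i \<Longrightarrow> h m \<le> p (Suc i)"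
    and guessed: "infinite {n. M (M n) = h n}"
  shows "infinite {i. M (p i) \<le> p (Suc i)}"
  unfolding infinite_nat_iff_unbounded_le
proof
  fix i0
  obtain n where n: "p i0 \<le> n" "M (M n) = h n"
    using guessed unfolding infinite_nat_iff_unbounded_le by blast
  obtain i where i: "p i \<le> n" "n < p (Suc i)"
    using strict_mono_interval_cover[OF p] by blast
  have "p i0 < p (Suc i)"
    using n(1) i(2) by linarith
  then have "i0 \<le> i"
    by (simp add: strict_mono_less[OF p(1)])
  show "\<exists>j\<ge>i0. j \<in> {i. M (p i) \<le> p (Suc i)}"
  proof (cases "M (p i) \<le> p (Suc i)")
    case True
    then show ?thesis
      using \<open>i0 \<le> i\<close> by blast
  next
    case False
    \<comment> \<open>then the next interval is long enough, since \<open>h\<close> is guessed correctly at \<open>n\<close>\<close>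
    then have "p (Suc i) \<le> M n"
      using M i(1) by (meson le_trans mono_def nat_le_linear)
    then have "M (p (Suc i)) \<le> h n"
      using M n(2) by (metis monoD)
    also have "h n \<le> p (Suc (Suc i))"
      using i(2) by (intro h_le_p) simp
    finally show ?thesis
      using \<open>i0 \<le> i\<close> by (intro exI[of _ "Suc i"]) simp
  qed
qed

lemma dominating_interval_partition:
  fixes h :: "nat \<Rightarrow> nat"
  obtains p :: "nat \<Rightarrow> nat" where "strict_mono p" "p 0 = 0" "\<And>m i. m \<le> p i \<Longrightarrow> h m \<le> p (Suc i)"
proof
  define p where "p = rec_nat 0 (\<lambda>i a. a + 1 + Max (h ` {..a}))"
  have p_Suc: "p (Suc i) = p i + 1 + Max (h ` {..p i})" for i
    by (simp add: p_def)
  show "strict_mono p" "p 0 = 0"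
    by (simp_all add: strict_mono_Suc_iff p_Suc p_def)
  show "h m \<le> p (Suc i)" if "m \<le> p i" for m i
  proof -
    have "h m \<le> Max (h ` {..p i})"
      using that by (intro Max_ge) auto
    then show ?thesis
      by (simp add: p_Suc)
  qed
qed

lemma io_guessable_interval_partition:
  fixes N :: "'a::topological_space \<Rightarrow> nat \<Rightarrow> nat"
  assumes "io_guessable X" and N [measurable]: "\<And>l. (\<lambda>x. N x l) \<in> borel \<rightarrow>\<^sub>M count_space UNIV"
  obtains p :: "nat \<Rightarrow> nat"
  where "strict_mono p" "p 0 = 0" "\<And>x. x \<in> X \<Longrightarrow> infinite {i. p i + N x (p i) \<le> p (Suc i)}"
proof -
  define M where "M x n = (\<Sum>m\<le>n. m + N x m)" for x n
  have M_ge: "n + N x n \<le> M x n" for x n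
    unfolding M_def by (rule member_le_sum) auto
  have M_mono: "mono (M x)" for x
    unfolding M_def mono_def by (auto intro: sum_mono2)
  have [measurable]: "(\<lambda>x. M x n) \<in> borel \<rightarrow>\<^sub>M count_space UNIV" for n
    using N unfolding M_def borel_measurable_nat_iff_count_space[symmetric] by measurable
  have "(\<lambda>x n. M x (M x n)) \<in> borel_measurable borel"
    unfolding borel_measurable_nat_seq_iff by measurable
  then obtain h where h: "\<forall>x\<in>X. infinite {n. M x (M x n) = h n}"
    using assms(1) unfolding io_guessable_def by blast
  obtain p where p: "strict_mono p" "p 0 = 0" and h_le_p: "\<And>m i. m \<le> p i \<Longrightarrow> h m \<le> p (Suc i)"
    by (rule dominating_interval_partition[of h]) blast
  have "infinite {i. p i + N x (p i) \<le> p (Suc i)}" if "x \<in> X" for x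
  proof -
    have "infinite {n. M x (M x n) = h n}"
      using h that by blast
    with M_mono p h_le_p have "infinite {i. M x (p i) \<le> p (Suc i)}"
      by (rule interval_partition_catches_majorant)
    then show ?thesis
      by (rule infinite_super[rotated]) (use M_ge order_trans in blast)
  qed
  with p show ?thesis
    by (rule that)
qed

section \<open>Generic reals from guesses\<close>

definition concat_blocks :: "(nat \<Rightarrow> nat) \<Rightarrow> (nat \<Rightarrow> 'a list) \<Rightarrow> nat \<Rightarrow> 'a" where
  "concat_blocks p B m = (let i = LEAST i. m < p (Suc i) in B i ! (m - p i))"

lemma take_seq_concat_blocks:
  fixes p :: "nat \<Rightarrow> nat"
  assumes p: "strict_mono p" and len: "length (B i) = p (Suc i) - p i"
  shows "take_seq (p (Suc i)) (concat_blocks p B) = take_seq (p i) (concat_blocks p B) @ B i"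
proof -
  have block: "(LEAST i'. m < p (Suc i')) = i" if "p i \<le> m" "m < p (Suc i)" for m
  proof (rule Least_equality)
    show "m < p (Suc i)" by fact
    show "i \<le> i'" if "m < p (Suc i')" for i'
    proof -
      have "p i < p (Suc i')"
        using that \<open>p i \<le> m\<close> by linarith
      then show ?thesis
        by (simp add: strict_mono_less[OF p])
    qed
  qed
  have "map (\<lambda>j. concat_blocks p B (p i + j)) [0..<p (Suc i) - p i] = B i"
    by (rule nth_equalityI) (simp_all add: len concat_blocks_def block)
  moreover have "p (Suc i) = p i + (p (Suc i) - p i)"
    using p by (simp add: strict_mono_Suc_iff less_imp_le)
  ultimately show ?thesis
    by (metis take_seq_add)
qed

definition meets_first :: "(nat \<Rightarrow> 'a list \<Rightarrow> bool) \<Rightarrow> nat \<Rightarrow> 'a list \<Rightarrow> bool" where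
  "meets_first W k u \<longleftrightarrow> (\<forall>j\<le>k. \<exists>v. prefix v u \<and> W j v)"

lemma meets_first_append: "meets_first W k u \<Longrightarrow> meets_first W k (u @ r)"
  unfolding meets_first_def by (meson prefix_prefix)

lemma meets_first_mono: "meets_first W k u \<Longrightarrow> j \<le> k \<Longrightarrow> meets_first W j u"
  unfolding meets_first_def by simp

lemma dense_family_meets_first:
  assumes "dense_family W"
  shows "\<exists>u. meets_first W k (s @ u)"
proof (induction k)
  case 0
  obtain u where "W 0 (s @ u)"
    using assms unfolding dense_family_def by blast
  then have "meets_first W 0 (s @ u)"
    unfolding meets_first_def by blast
  then show ?case ..
next
  case (Suc k)
  then obtain u where u: "meets_first W k (s @ u)"
    by blast
  obtain r where r: "W (Suc k) ((s @ u) @ r)"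
    using assms unfolding dense_family_def by blast
  have "meets_first W (Suc k) (s @ u @ r)"
    unfolding meets_first_def
  proof (intro allI impI)
    fix j
    assume "j \<le> Suc k"
    then consider "j \<le> k" | "j = Suc k"
      by linarith
    then show "\<exists>v. prefix v (s @ u @ r) \<and> W j v"
    proof cases
      case 1
      then show ?thesis
        using meets_first_append[OF u, of r] unfolding meets_first_def by simp
    next
      case 2
      then show ?thesis
        using r by auto
    qed
  qed
  then show ?case ..
qed

definition forces :: "(nat \<Rightarrow> 'a list \<Rightarrow> bool) \<Rightarrow> nat \<Rightarrow> 'a list \<Rightarrow> bool" where
  "forces W l s \<longleftrightarrow> (\<forall>t. length t = l \<longrightarrow> meets_first W l (t @ s))"

lemma forces_append: "forces W l s \<Longrightarrow> forces W l (s @ r)"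
  unfolding forces_def by (metis append.assoc meets_first_append)

lemma dense_family_forces:
  fixes W :: "nat \<Rightarrow> 'a::finite list \<Rightarrow> bool"
  assumes "dense_family W"
  shows "\<exists>s. forces W l s"
proof -
  \<comment> \<open>there are only finitely many stems of length \<open>l\<close>; extend them one after another\<close>
  have "\<exists>s. \<forall>t\<in>T. meets_first W l (t @ s)" if "finite T" for T :: "'a list set"
    using that
  proof (induction T rule: finite_induct)
    case (insert t0 T)
    then obtain s where s: "\<forall>t\<in>T. meets_first W l (t @ s)"
      by blast
    obtain u where "meets_first W l ((t0 @ s) @ u)"
      using dense_family_meets_first[OF assms] by blast
    then have "\<forall>t\<in>insert t0 T. meets_first W l (t @ s @ u)"
      using s meets_first_append by (metis append.assoc insert_iff)
    then show ?case
      by blast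
  qed simp
  moreover have "finite {t :: 'a list. length t = l}"
    using finite_lists_length_eq[of "UNIV :: 'a set" l] by simp
  ultimately show ?thesis
    unfolding forces_def by blast
qed

definition forcing_length :: "(nat \<Rightarrow> 'a list \<Rightarrow> bool) \<Rightarrow> nat \<Rightarrow> nat" where
  "forcing_length W l = (LEAST L. \<exists>s. length s = L \<and> forces W l s)"

lemma forces_of_length:
  fixes W :: "nat \<Rightarrow> 'a::finite list \<Rightarrow> bool"
  assumes "dense_family W" "forcing_length W l \<le> L"
  shows "\<exists>s. length s = L \<and> forces W l s"
proof -
  have "\<exists>L s. length s = L \<and> forces W l s"
    using dense_family_forces[OF assms(1)] by blast
  then have "\<exists>s. length s = forcing_length W l \<and> forces W l s"
    unfolding forcing_length_def by (rule LeastI_ex)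
  then obtain s where s: "length s = forcing_length W l" "forces W l s"
    by blast
  show ?thesis
    using s assms(2)
    by (intro exI[of _ "s @ replicate (L - forcing_length W l) undefined"]) (simp add: forces_append)
qed

lemma pred_forces:
  fixes W :: "'b \<Rightarrow> nat \<Rightarrow> 'a::countable list \<Rightarrow> bool"
  assumes [measurable]: "\<And>k u. Measurable.pred M (\<lambda>x. W x k u)"
  shows "Measurable.pred M (\<lambda>x. forces (W x) l s)"
  unfolding forces_def meets_first_def by measurable

lemma measurable_forcing_length:
  fixes W :: "'b \<Rightarrow> nat \<Rightarrow> 'a::countable list \<Rightarrow> bool"
  assumes "\<And>k u. Measurable.pred M (\<lambda>x. W x k u)"
  shows "(\<lambda>x. forcing_length (W x) l) \<in> M \<rightarrow>\<^sub>M count_space UNIV"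
proof -
  note pred_forces[OF assms, measurable]
  show ?thesis
    unfolding forcing_length_def by measurable
qed

definition forcing_string :: "(nat \<Rightarrow> 'a::countable list \<Rightarrow> bool) \<Rightarrow> nat \<Rightarrow> nat \<Rightarrow> 'a list" where
  "forcing_string W l L = from_nat (LEAST c. length (from_nat c :: 'a list) = L \<and> forces W l (from_nat c))"

lemma forcing_string:
  fixes W :: "nat \<Rightarrow> 'a::{finite, countable} list \<Rightarrow> bool"
  assumes "dense_family W" "forcing_length W l \<le> L"
  shows "length (forcing_string W l L) = L \<and> forces W l (forcing_string W l L)"
proof -
  obtain s :: "'a list" where "length s = L" "forces W l s"
    using forces_of_length[OF assms] by blast
  then have "length (from_nat (to_nat s) :: 'a list) = L \<and> forces W l (from_nat (to_nat s))"
    by simp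
  then show ?thesis
    unfolding forcing_string_def by (rule LeastI)
qed

lemma measurable_forcing_string:
  fixes W :: "'b \<Rightarrow> nat \<Rightarrow> 'a::countable list \<Rightarrow> bool"
  assumes "\<And>k u. Measurable.pred M (\<lambda>x. W x k u)"
  shows "(\<lambda>x. to_nat (forcing_string (W x) l L)) \<in> M \<rightarrow>\<^sub>M count_space UNIV"
proof -
  note pred_forces[OF assms, measurable]
  show ?thesis
    unfolding forcing_string_def by measurable
qed

lemma generic_for_concat_blocks:
  fixes p :: "nat \<Rightarrow> nat"
  assumes p: "strict_mono p"
    and blocks: "infinite {i. length (B i) = p (Suc i) - p i \<and> forces W (p i) (B i)}"
  shows "generic_for W (concat_blocks p B)"
  unfolding generic_for_def
proof
  fix k
  obtain i where i: "k \<le> i" "length (B i) = p (Suc i) - p i" "forces W (p i) (B i)"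
    using blocks unfolding infinite_nat_iff_unbounded_le by blast
  let ?y = "concat_blocks p B"
  have "meets_first W (p i) (take_seq (p i) ?y @ B i)"
    using i(3) unfolding forces_def by simp
  then have "meets_first W k (take_seq (p (Suc i)) ?y)"
    using take_seq_concat_blocks[of p B i, OF p i(2)] meets_first_mono order_trans[OF i(1) strict_mono_imp_increasing[OF p]]
    by metis
  then obtain v where "prefix v (take_seq (p (Suc i)) ?y)" "W k v"
    unfolding meets_first_def by blast
  then show "\<exists>n. W k (take_seq n ?y)"
    by (auto simp: prefix_take_seq_iff)
qed

lemma io_guessable_generic:
  fixes X :: "'a::topological_space set" and W :: "'a \<Rightarrow> nat \<Rightarrow> bool list \<Rightarrow> bool"
  assumes "io_guessable X" and W: "\<And>k u. Measurable.pred borel (\<lambda>x. W x k u)"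
    and dense: "\<And>x. dense_family (W x)"
  shows "\<exists>y. \<forall>x\<in>X. generic_for (W x) y"
proof -
  have forcing_length_measurable [measurable]:
    "(\<lambda>x. forcing_length (W x) l) \<in> borel \<rightarrow>\<^sub>M count_space UNIV" for l
    by (rule measurable_forcing_length) (rule W)
  obtain p :: "nat \<Rightarrow> nat" where p: "strict_mono p" "p 0 = 0"
    and long: "\<And>x. x \<in> X \<Longrightarrow> infinite {i. p i + forcing_length (W x) (p i) \<le> p (Suc i)}"
    by (rule io_guessable_interval_partition[where N = "\<lambda>x. forcing_length (W x)",
          OF assms(1) forcing_length_measurable]) blast
  define A where "A x = {i. p i + forcing_length (W x) (p i) \<le> p (Suc i)}" for x
  define c where "c x i = to_nat (forcing_string (W x) (p i) (p (Suc i) - p i))" for x i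
  have c_measurable: "(\<lambda>x. c x i) \<in> borel \<rightarrow>\<^sub>M count_space UNIV" for i
    unfolding c_def by (rule measurable_forcing_string) (rule W)
  have A_measurable: "Measurable.pred borel (\<lambda>x. i \<in> A x)" for i
    unfolding A_def by measurable
  have "\<exists>g. \<forall>x\<in>X. infinite {i \<in> A x. c x i = g i}"
    by (rule io_guessable_on_sets[OF assms(1) c_measurable A_measurable]) (use long in \<open>simp add: A_def\<close>)
  then obtain g where g: "\<forall>x\<in>X. infinite {i \<in> A x. c x i = g i}"
    by blast
  have "generic_for (W x) (concat_blocks p (\<lambda>i. from_nat (g i)))" if "x \<in> X" for x
  proof (rule generic_for_concat_blocks[OF p(1)])
    have block: "length (from_nat (g i) :: bool list) = p (Suc i) - p i \<and> forces (W x) (p i) (from_nat (g i))"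
      if "i \<in> A x" "c x i = g i" for i
    proof -
      have "from_nat (g i) = forcing_string (W x) (p i) (p (Suc i) - p i)"
        using that(2) unfolding c_def by (metis from_nat_to_nat)
      moreover have "forcing_length (W x) (p i) \<le> p (Suc i) - p i"
        using that(1) by (simp add: A_def)
      ultimately show ?thesis
        using forcing_string[OF dense] by simp
    qed
    have "{i \<in> A x. c x i = g i} \<subseteq> {i. length (from_nat (g i) :: bool list) = p (Suc i) - p i \<and>
        forces (W x) (p i) (from_nat (g i))}"
      using block by blast
    then show "infinite {i. length (from_nat (g i) :: bool list) = p (Suc i) - p i \<and>
        forces (W x) (p i) (from_nat (g i))}"
      by (rule infinite_super) (use g \<open>x \<in> X\<close> in blast)
  qed
  then show ?thesis
    by blast
qed

lemma R_set_if_io_guessable: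
  assumes "io_guessable X"
  shows "R_set X"
  unfolding R_set_def
proof (intro ballI impI)
  fix H :: "(cantor \<times> cantor) set"
  assume H: "H \<in> sets borel" and meager: "\<forall>x. meager (section_at H x)"
  obtain W :: "cantor \<Rightarrow> nat \<Rightarrow> bool list \<Rightarrow> bool"
    where "\<And>k u. Measurable.pred borel (\<lambda>x. W x k u)" "\<And>x. dense_family (W x)"
      and avoid: "\<And>x y. generic_for (W x) y \<Longrightarrow> (x, y) \<notin> H"
    by (rule borel_meager_sections_avoid_generic[OF H meager[rule_format]]) blast
  then obtain y where "\<forall>x\<in>X. generic_for (W x) y"
    using io_guessable_generic[OF assms] by blast
  then have "y \<notin> (\<Union>x\<in>X. section_at H x)"
    using avoid by (auto simp: section_at_def)
  then show "(\<Union>x\<in>X. section_at H x) \<noteq> UNIV"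
    by blast
qed

section \<open>Coding guesses by reals\<close>

definition column_code :: "cantor \<Rightarrow> nat \<Rightarrow> nat" where
  "column_code y n = (if \<exists>k. y (prod_encode (n, k)) then LEAST k. y (prod_encode (n, k)) else 0)"

definition first_true_in_column :: "cantor \<Rightarrow> nat \<Rightarrow> nat \<Rightarrow> bool" where
  "first_true_in_column y n k \<longleftrightarrow> y (prod_encode (n, k)) \<and> (\<forall>j<k. \<not> y (prod_encode (n, j)))"

lemma column_code_eqI: "first_true_in_column y n k \<Longrightarrow> column_code y n = k"
  unfolding first_true_in_column_def column_code_def
  by (auto intro!: Least_equality simp: not_less[symmetric])

lemma open_first_true_in_column: "open {y. first_true_in_column y n k}"
proof -
  have "{y. first_true_in_column y n k} = (\<lambda>y. y (prod_encode (n, k))) -` {True} \<inter>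
      (\<Inter>j<k. (\<lambda>y. y (prod_encode (n, j))) -` {False})"
    unfolding first_true_in_column_def by auto
  then show ?thesis
    by (simp add: open_Int open_INT open_vimage_coordinate)
qed

lemma nowhere_dense_never_first_true:
  fixes h :: "nat \<Rightarrow> nat"
  shows "nowhere_dense {y. \<forall>n\<ge>m. \<not> first_true_in_column y n (h n)}" (is "nowhere_dense ?E")
proof -
  have "?E = (\<Inter>n\<in>{m..}. - {y. first_true_in_column y n (h n)})"
    by auto
  then have "closed ?E"
    by (simp only:) (intro closed_INT ballI closed_Compl open_first_true_in_column)
  moreover have "interior ?E = {}"
  proof (rule ccontr)
    assume "interior ?E \<noteq> {}"
    then obtain z where z: "z \<in> interior ?E"
      by blast
    obtain l where l: "cylinder (take_seq l z) \<subseteq> interior ?E"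
      using open_contains_cylinder[OF open_interior z] .
    \<comment> \<open>modify \<open>z\<close> beyond position \<open>l\<close> so that its first \<open>True\<close> in column \<open>n\<close> is at \<open>h n\<close>\<close>
    define n where "n = max m l"
    define y where "y j = (if j < l then z j else j = prod_encode (n, h n))" for j
    have "y \<in> cylinder (take_seq l z)"
      by (simp add: y_def mem_cylinder_take_seq)
    then have "y \<in> ?E"
      using l interior_subset by blast
    moreover have "\<not> prod_encode (n, k) < l" for k
      using le_prod_encode_1[of n k] by (simp add: n_def)
    then have "first_true_in_column y n (h n)"
      unfolding first_true_in_column_def y_def by (simp add: prod_encode_eq)
    ultimately show False
      by (simp add: n_def)
  qed
  ultimately show ?thesis
    by (simp add: nowhere_dense_def closure_closed)
qed

lemma meager_eventually_different_column_code:
  fixes h :: "nat \<Rightarrow> nat"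
  shows "meager {y. \<exists>m. \<forall>n\<ge>m. h n \<noteq> column_code y n}"
proof -
  have "{y. \<exists>m. \<forall>n\<ge>m. h n \<noteq> column_code y n} \<subseteq>
      (\<Union>m. {y. \<forall>n\<ge>m. \<not> first_true_in_column y n (h n)})"
    using column_code_eqI by fastforce
  then show ?thesis
    unfolding meager_def using nowhere_dense_never_first_true
    by (intro exI[of _ "\<lambda>m. {y. \<forall>n\<ge>m. \<not> first_true_in_column y n (h n)}"]) simp
qed

lemma io_guessable_if_R_set:
  assumes "R_set X"
  shows "io_guessable X"
  unfolding io_guessable_def
proof (intro allI impI)
  fix f :: "cantor \<Rightarrow> nat \<Rightarrow> nat"
  assume "f \<in> borel_measurable borel"
  then have f [measurable]: "(\<lambda>x. f x n) \<in> borel \<rightarrow>\<^sub>M count_space UNIV" for n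
    by (simp add: borel_measurable_nat_seq_iff)
  have [measurable]: "Measurable.pred borel (\<lambda>y::cantor. y j)" for j
    using open_vimage_coordinate[of j "{True}"] by (simp add: pred_def vimage_def)
  have [measurable]: "(\<lambda>y. column_code y n) \<in> borel \<rightarrow>\<^sub>M count_space UNIV" for n
    unfolding column_code_def by measurable
  have "fst \<in> (borel :: (cantor \<times> cantor) measure) \<rightarrow>\<^sub>M borel"
    "snd \<in> (borel :: (cantor \<times> cantor) measure) \<rightarrow>\<^sub>M borel"
    by (intro borel_measurable_continuous_onI continuous_intros)+
  note this[measurable]
  define H where "H = {z :: cantor \<times> cantor. \<exists>m. \<forall>n\<ge>m. f (fst z) n \<noteq> column_code (snd z) n}"
  have "H \<in> sets borel"
    unfolding H_def by measurable
  moreover have "meager (section_at H x)" for x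
    using meager_eventually_different_column_code[of "f x"] by (simp add: H_def section_at_def)
  ultimately obtain y where y: "\<And>x. x \<in> X \<Longrightarrow> y \<notin> section_at H x"
    using assms unfolding R_set_def by blast
  have "infinite {n. f x n = column_code y n}" if "x \<in> X" for x
    using y[OF that] unfolding H_def section_at_def
    by (auto simp: infinite_nat_iff_unbounded_le not_le)
  then show "\<exists>g. \<forall>x\<in>X. infinite {n. f x n = g n}"
    by blast
qed

section \<open>Rothberger's property\<close>

lemma rothberger_infinitely_often:
  fixes G :: "nat \<Rightarrow> 'a::topological_space set set"
  assumes roth: "rothberger Y"
    and G: "\<And>n. G n \<noteq> {} \<and> (\<forall>U\<in>G n. open U) \<and> Y \<subseteq> \<Union>(G n)"
  shows "\<exists>U. (\<forall>n. U n \<in> G n) \<and> (\<forall>y\<in>Y. infinite {n. y \<in> U n})"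
proof -
  \<comment> \<open>apply the property separately to each of the sequences of covers \<open>G \<langle>j, n\<rangle>\<close>, \<open>n \<in> \<nat>\<close>\<close>
  have "\<exists>V. (\<forall>n. V n \<in> G (prod_encode (j, n))) \<and> Y \<subseteq> (\<Union>n. V n)" for j
  proof -
    have "\<forall>n. G (prod_encode (j, n)) \<noteq> {} \<and> (\<forall>U\<in>G (prod_encode (j, n)). open U) \<and>
        Y \<subseteq> \<Union>(G (prod_encode (j, n)))"
      using G by blast
    then show ?thesis
      using roth[unfolded rothberger_def, THEN spec, of "\<lambda>n. G (prod_encode (j, n))"] by simp
  qed
  then obtain V where V: "\<And>j n. V j n \<in> G (prod_encode (j, n))" and cover: "\<And>j. Y \<subseteq> (\<Union>n. V j n)"
    by metis
  define U where "U q = V (fst (prod_decode q)) (snd (prod_decode q))" for q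
  have "U q \<in> G q" for q
    using V[of "fst (prod_decode q)" "snd (prod_decode q)"] by (simp add: U_def)
  moreover have "infinite {q. y \<in> U q}" if y: "y \<in> Y" for y
    unfolding infinite_nat_iff_unbounded_le
  proof
    fix j
    obtain n where "y \<in> V j n"
      using cover[of j] y by blast
    then have "y \<in> U (prod_encode (j, n))"
      by (simp add: U_def)
    then show "\<exists>q\<ge>j. q \<in> {q. y \<in> U q}"
      using le_prod_encode_1 by blast
  qed
  ultimately show ?thesis
    by blast
qed

lemma open_covers_enumeration:
  fixes G :: "nat \<Rightarrow> 'a::second_countable_topology set set"
  assumes "\<And>n. G n \<noteq> {}" "\<And>n U. U \<in> G n \<Longrightarrow> open U"
  shows "\<exists>U :: nat \<Rightarrow> nat \<Rightarrow> 'a set. \<forall>n. range (U n) \<subseteq> G n \<and> \<Union>(range (U n)) = \<Union>(G n)"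
proof -
  have "\<exists>U :: nat \<Rightarrow> 'a set. range U \<subseteq> G n \<and> \<Union>(range U) = \<Union>(G n)" for n
  proof -
    obtain C where C: "C \<subseteq> G n" "countable C" "\<Union>C = \<Union>(G n)"
      using Lindelof[of "G n"] assms(2) by metis
    obtain U0 where "U0 \<in> G n"
      using assms(1) by blast
    then have "range (from_nat_into (insert U0 C)) = insert U0 C"
      using C(2) by (simp add: range_from_nat_into)
    then show ?thesis
      using C \<open>U0 \<in> G n\<close> by (intro exI[of _ "from_nat_into (insert U0 C)"]) auto
  qed
  then show ?thesis
    by (rule choice[OF allI])
qed

lemma rothberger_image_if_io_guessable:
  fixes X :: "'a::topological_space set" and F :: "'a \<Rightarrow> 'b::second_countable_topology"
  assumes guess: "io_guessable X" and F: "F \<in> borel_measurable borel"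
  shows "rothberger (F ` X)"
  unfolding rothberger_def
proof (intro allI impI)
  fix G :: "nat \<Rightarrow> 'b set set"
  assume G: "\<forall>n. G n \<noteq> {} \<and> (\<forall>U\<in>G n. open U) \<and> F ` X \<subseteq> \<Union>(G n)"
  have "\<exists>U :: nat \<Rightarrow> nat \<Rightarrow> 'b set. \<forall>n. range (U n) \<subseteq> G n \<and> \<Union>(range (U n)) = \<Union>(G n)"
    using G by (intro open_covers_enumeration) auto
  then obtain U :: "nat \<Rightarrow> nat \<Rightarrow> 'b set"
    where U_G: "\<forall>n. range (U n) \<subseteq> G n \<and> \<Union>(range (U n)) = \<Union>(G n)"
    by blast
  then have U: "range (U n) \<subseteq> G n" and U_cover: "\<Union>(range (U n)) = \<Union>(G n)" for n
    by auto
  have [measurable]: "Measurable.pred borel (\<lambda>x. F x \<in> U n k)" for n k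
  proof -
    have "open (U n k)"
      using G U by blast
    then show ?thesis
      using measurable_sets[OF F, of "U n k"] by (simp add: pred_def vimage_def)
  qed
  define f where "f x n = (LEAST k. F x \<in> U n k)" for x n
  have "f \<in> borel_measurable borel"
    unfolding borel_measurable_nat_seq_iff f_def by measurable
  then obtain g where g: "\<forall>x\<in>X. infinite {n. f x n = g n}"
    using guess unfolding io_guessable_def by blast
  have "F ` X \<subseteq> (\<Union>n. U n (g n))"
  proof
    fix z
    assume "z \<in> F ` X"
    then obtain x where x: "x \<in> X" "z = F x"
      by blast
    then obtain n where n: "f x n = g n"
      using g not_finite_existsD by blast
    have "\<exists>k. F x \<in> U n k"
      using G U_cover x by blast
    then have "F x \<in> U n (f x n)"
      unfolding f_def by (rule LeastI_ex)
    then show "z \<in> (\<Union>n. U n (g n))"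
      using n x by auto
  qed
  moreover have "U n (g n) \<in> G n" for n
    using U by blast
  ultimately show "\<exists>V. (\<forall>n. V n \<in> G n) \<and> F ` X \<subseteq> (\<Union>n. V n)"
    by (intro exI[of _ "\<lambda>n. U n (g n)"]) blast
qed

lemma io_guess_from_rothberger_image:
  fixes f :: "'a \<Rightarrow> nat \<Rightarrow> nat"
  assumes "rothberger ((\<lambda>x n. real (f x n)) ` X)"
  shows "\<exists>g. \<forall>x\<in>X. infinite {n. f x n = g n}"
proof -
  define V where "V q k = {z :: nat \<Rightarrow> real. dist (z q) (real k) < 1 / 2}" for q k :: nat
  have open_V: "open (V q k)" for q k
  proof -
    have "V q k = (\<lambda>z. z q) -` ball (real k) (1 / 2)"
      by (auto simp: V_def dist_commute)
    then show ?thesis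
      by (simp add: open_vimage continuous_on_product_coordinates)
  qed
  have in_V: "(\<lambda>n. real (f x n)) \<in> V q (f x q)" for x q
    by (simp add: V_def)
  have "\<exists>U. (\<forall>q. U q \<in> range (V q)) \<and> (\<forall>z\<in>(\<lambda>x n. real (f x n)) ` X. infinite {q. z \<in> U q})"
    by (rule rothberger_infinitely_often[OF assms]) (use open_V in_V in blast)
  then obtain U where U: "\<And>q. U q \<in> range (V q)"
    and io: "\<forall>x\<in>X. infinite {q. (\<lambda>n. real (f x n)) \<in> U q}"
    by blast
  have "\<forall>q. \<exists>k. U q = V q k"
    using U by blast
  from choice[OF this] obtain g where g: "\<And>q. U q = V q (g q)"
    by blast
  have agree: "f x q = g q" if "(\<lambda>n. real (f x n)) \<in> U q" for x q
  proof (rule ccontr)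
    assume "f x q \<noteq> g q"
    then have "1 \<le> dist (real (f x q)) (real (g q))"
      by (simp add: dist_of_nat)
    then show False
      using that by (simp add: g V_def)
  qed
  have "infinite {q. f x q = g q}" if "x \<in> X" for x
  proof (rule infinite_super)
    show "infinite {q. (\<lambda>n. real (f x n)) \<in> U q}"
      using io that by blast
  qed (use agree in blast)
  then show ?thesis
    by blast
qed

lemma io_guessable_if_rothberger_images:
  fixes X :: "'a::topological_space set"
  assumes roth: "\<And>F :: 'a \<Rightarrow> nat \<Rightarrow> real. F \<in> borel_measurable borel \<Longrightarrow> rothberger (F ` X)"
  shows "io_guessable X"
  unfolding io_guessable_def
proof (intro allI impI)
  fix f :: "'a \<Rightarrow> nat \<Rightarrow> nat"
  assume "f \<in> borel_measurable borel"
  then have [measurable]: "(\<lambda>x. f x n) \<in> borel \<rightarrow>\<^sub>M count_space UNIV" for n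
    by (simp add: borel_measurable_nat_seq_iff)
  have "(\<lambda>x n. real (f x n)) \<in> borel_measurable borel"
    by (intro measurable_coordinatewise_then_product) measurable
  then show "\<exists>g. \<forall>x\<in>X. infinite {n. f x n = g n}"
    by (intro io_guess_from_rothberger_image roth)
qed

theorem theorem2p3:
  fixes X :: "(nat \<Rightarrow> bool) set"
  shows "(R_set X \<longleftrightarrow>
           (\<forall>f :: (nat \<Rightarrow> bool) \<Rightarrow> (nat \<Rightarrow> nat). f \<in> borel_measurable borel \<longrightarrow>
              (\<exists>g :: nat \<Rightarrow> nat. \<forall>x\<in>X. infinite {n. f x n = g n})))
       \<and> (R_set X \<longrightarrow>
           (\<forall>F :: (nat \<Rightarrow> bool) \<Rightarrow> 'p::polish_space. F \<in> borel_measurable borel \<longrightarrow>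
              rothberger (F ` X)))
       \<and> ((\<forall>F :: (nat \<Rightarrow> bool) \<Rightarrow> (nat \<Rightarrow> real). F \<in> borel_measurable borel \<longrightarrow>
              rothberger (F ` X)) \<longrightarrow> R_set X)"
proof -
  have R_iff: "R_set X \<longleftrightarrow> io_guessable X"
    using R_set_if_io_guessable io_guessable_if_R_set by blast
  show ?thesis
    unfolding R_iff[unfolded io_guessable_def, symmetric]
    using R_iff rothberger_image_if_io_guessable io_guessable_if_rothberger_images R_set_if_io_guessable
    by blast
qed
end
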